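(* There is $\bar\varepsilon>0$ such that the following holds for all $x_0\in\mathbb R$ and $|\varepsilon|<\bar\varepsilon$. Put $y_0=Y(x_0,\varepsilon)$ and $\delta=\Delta(x_0,\varepsilon)$, and let $$(x_1,y_1)=T_{\varepsilon,\delta}(x_0,y_0).$$ Then $$\Delta(x_1,\varepsilon)=\Delta(x_0,\varepsilon)\qquad\text{and}\qquad Y(x_1,\varepsilon)=y_1.$$
   Context: Fix integers $p$ and $q\ge1$ and put $\mu=2\pi p/q$. Let $f:\mathbb R\to\mathbb R$ be a $2\pi$-periodic real-analytic function. For real parameters $\varepsilon,\delta$ set $g(x)=-\delta-\varepsilon f(x)$ and consider the map $T_{\varepsilon,\delta}(x,y)=(x+y+\mu+g(x),\;y+g(x))$ on $\mathbb R^2$. Define ${}_nR$ and ${}_nS$ by $T^n_{\varepsilon,\delta}(x_0,y_0)=(x_0+n\mu+{}_nR,\;y_0+{}_nS)$. There exist $\bar{\bar\varepsilon},\eta>0$ and real-analytic functions $\Delta(x,\varepsilon)$ and $Y(x,\varepsilon)$, defined for $x\in\mathbb R$ and $|\varepsilon|<\bar{\bar\varepsilon}$ and vanishing at $\varepsilon=0$, such that $(\delta,y)=(\Delta(x,\varepsilon),Y(x,\varepsilon))$ is the unique solution with $|\delta|,|y|<\eta$ of ${}_qR(x,y,\varepsilon,\delta)={}_qS(x,y,\varepsilon,\delta)=0$. *)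

theory Defs
  imports "HOL-Analysis.Analysis"
begin

definition real_analytic_on :: "(real \<Rightarrow> real) \<Rightarrow> real set \<Rightarrow> bool" where
  "real_analytic_on F S \<longleftrightarrow>
     (\<forall>x0\<in>S. \<exists>r>0. \<exists>c :: nat \<Rightarrow> real.
        \<forall>x. \<bar>x - x0\<bar> < r \<longrightarrow> ((\<lambda>i. c i * (x - x0) ^ i) has_sum F x) UNIV)"

definition real_analytic2_on :: "(real \<Rightarrow> real \<Rightarrow> real) \<Rightarrow> (real \<times> real) set \<Rightarrow> bool" where
  "real_analytic2_on F S \<longleftrightarrow>
     (\<forall>(x0, e0)\<in>S. \<exists>r>0. \<exists>c :: nat \<Rightarrow> nat \<Rightarrow> real.
        \<forall>x e. \<bar>x - x0\<bar> < r \<longrightarrow> \<bar>e - e0\<bar> < r \<longrightarrow>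
          ((\<lambda>(i, j). c i j * (x - x0) ^ i * (e - e0) ^ j) has_sum F x e) UNIV)"

definition Tmap :: "(real \<Rightarrow> real) \<Rightarrow> real \<Rightarrow> real \<Rightarrow> real \<Rightarrow> real \<times> real \<Rightarrow> real \<times> real" where
  "Tmap f mu eps delta = (\<lambda>(x, y).
     (let g = - delta - eps * f x in (x + y + mu + g, y + g)))"

definition nR :: "(real \<Rightarrow> real) \<Rightarrow> real \<Rightarrow> nat \<Rightarrow> real \<Rightarrow> real \<Rightarrow> real \<Rightarrow> real \<Rightarrow> real" where
  "nR f mu n x y eps delta = fst ((Tmap f mu eps delta ^^ n) (x, y)) - x - real n * mu"

definition nS :: "(real \<Rightarrow> real) \<Rightarrow> real \<Rightarrow> nat \<Rightarrow> real \<Rightarrow> real \<Rightarrow> real \<Rightarrow> real \<Rightarrow> real" where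
  "nS f mu n x y eps delta = snd ((Tmap f mu eps delta ^^ n) (x, y)) - y"

end

theory Submission
  imports Defs "HOL-Library.Periodic_Fun"
begin

text \<open>The map T commutes with the translation x \<mapsto> x + 2 \<pi> p = x + q \<mu>, so it maps a (p, q)-periodic
  orbit with parameter \<delta> to another one: (\<Delta>(x0, \<epsilon>), y1) again solves the defining equations at x1,
  and uniqueness identifies it with (\<Delta>(x1, \<epsilon>), Y(x1, \<epsilon>)) as soon as |y1| < \<eta>. Now
  y1 = Y - \<Delta> - \<epsilon> f, evaluated at x0, is analytic and vanishes at \<epsilon> = 0, hence O(\<epsilon>) locally in x;
  it is 2\<pi>-periodic in x (again by uniqueness), so compactness of a period interval makes the bound
  uniform in x.\<close>

definition eps_linear_near :: "(real \<Rightarrow> real \<Rightarrow> real) \<Rightarrow> real \<Rightarrow> bool" where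
  "eps_linear_near F x0 \<longleftrightarrow>
     (\<exists>s>0. \<exists>K. \<forall>x e. \<bar>x - x0\<bar> < s \<longrightarrow> \<bar>e\<bar> < s \<longrightarrow> \<bar>F x e\<bar> \<le> K * \<bar>e\<bar>)"

lemma abs_power_minus_zero_power_le:
  fixes e s :: real
  assumes "\<bar>e\<bar> \<le> s" "s > 0"
  shows "\<bar>e ^ j - 0 ^ j\<bar> \<le> \<bar>e\<bar> / s * s ^ j"
proof (cases j)
  case (Suc i)
  have "\<bar>e\<bar> * \<bar>e\<bar> ^ i \<le> \<bar>e\<bar> * s ^ i"
    using assms by (intro mult_left_mono power_mono) auto
  then show ?thesis
    using Suc assms by (simp add: abs_mult power_abs)
qed (use assms in auto)

lemma real_analytic2_on_imp_eps_linear_near: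
  assumes "real_analytic2_on F S" "(x0, 0) \<in> S" "\<forall>x. F x 0 = 0"
  shows "eps_linear_near F x0"
proof -
  obtain r c where r: "r > 0" and series: "\<And>x e. \<bar>x - x0\<bar> < r \<Longrightarrow> \<bar>e\<bar> < r \<Longrightarrow>
      ((\<lambda>(i, j). c i j * (x - x0) ^ i * e ^ j) has_sum F x e) UNIV"
    using assms(1,2) unfolding real_analytic2_on_def by fastforce
  define s where "s = r / 2"
  have s: "0 < s" "s < r"
    using r by (auto simp: s_def)
  have "(\<lambda>(i, j). c i j * s ^ i * s ^ j) summable_on UNIV"
    using has_sum_imp_summable[OF series[of "x0 + s" s]] s by simp
  then have "(\<lambda>k. norm ((\<lambda>(i, j). c i j * s ^ i * s ^ j) k)) summable_on UNIV"
    by (rule summable_on_iff_abs_summable_on_real[THEN iffD1])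
  moreover have "(\<lambda>k. norm ((\<lambda>(i, j). c i j * s ^ i * s ^ j) k)) = (\<lambda>(i, j). \<bar>c i j\<bar> * s ^ i * s ^ j)"
    using s by (simp add: fun_eq_iff abs_mult power_abs)
  ultimately have "(\<lambda>(i, j). \<bar>c i j\<bar> * s ^ i * s ^ j) summable_on UNIV"
    by simp
  then obtain M where M: "((\<lambda>(i, j). \<bar>c i j\<bar> * s ^ i * s ^ j) has_sum M) UNIV"
    unfolding summable_on_def by blast
  \<comment> \<open>Subtracting the series of F x 0 = 0 removes the terms with j = 0, and each remaining
    term gains the factor |e|/s against the absolutely convergent majorant at radius s.\<close>
  have "\<bar>F x e\<bar> \<le> M / s * \<bar>e\<bar>" if x: "\<bar>x - x0\<bar> < s" and e: "\<bar>e\<bar> < s" for x e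
  proof -
    have sum: "((\<lambda>(i, j). c i j * (x - x0) ^ i * (e ^ j - 0 ^ j)) has_sum F x e) UNIV"
      using has_sum_add[OF series[of x e] has_sum_uminusI[OF series[of x 0]]] x e s assms(3)
      by (simp add: case_prod_unfold right_diff_distrib)
    have majorant: "((\<lambda>k. \<bar>e\<bar> / s * (\<lambda>(i, j). \<bar>c i j\<bar> * s ^ i * s ^ j) k) has_sum \<bar>e\<bar> / s * M) UNIV"
      by (rule has_sum_cmult_right[OF M])
    have termwise: "\<bar>c i j * (x - x0) ^ i * (e ^ j - 0 ^ j)\<bar> \<le> \<bar>e\<bar> / s * (\<bar>c i j\<bar> * s ^ i * s ^ j)" for i j
    proof -
      have "\<bar>x - x0\<bar> ^ i * \<bar>e ^ j - 0 ^ j\<bar> \<le> s ^ i * (\<bar>e\<bar> / s * s ^ j)"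
        using x e s abs_power_minus_zero_power_le[of e s j]
        by (intro mult_mono power_mono) auto
      then have "\<bar>c i j\<bar> * (\<bar>x - x0\<bar> ^ i * \<bar>e ^ j - 0 ^ j\<bar>) \<le> \<bar>c i j\<bar> * (s ^ i * (\<bar>e\<bar> / s * s ^ j))"
        by (rule mult_left_mono) simp
      then show ?thesis
        by (simp add: abs_mult power_abs mult_ac)
    qed
    have "norm (F x e) \<le> \<bar>e\<bar> / s * M"
      by (rule norm_infsum_le[OF sum majorant]) (auto simp only: real_norm_def split: prod.split intro: termwise)
    then show ?thesis by (simp add: mult.commute)
  qed
  then show ?thesis
    unfolding eps_linear_near_def using s by blast
qed

lemma real_analytic_on_locally_bounded:
  assumes "real_analytic_on f S" "x0 \<in> S"
  shows "\<exists>s>0. \<exists>B. \<forall>x. \<bar>x - x0\<bar> < s \<longrightarrow> \<bar>f x\<bar> \<le> B"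
proof -
  obtain r c where r: "r > 0" and series: "\<And>x. \<bar>x - x0\<bar> < r \<Longrightarrow>
      ((\<lambda>i. c i * (x - x0) ^ i) has_sum f x) UNIV"
    using assms unfolding real_analytic_on_def by blast
  define s where "s = r / 2"
  have s: "0 < s" "s < r"
    using r by (auto simp: s_def)
  have "(\<lambda>i. c i * s ^ i) summable_on UNIV"
    using has_sum_imp_summable[OF series[of "x0 + s"]] s by simp
  then have "(\<lambda>i. norm (c i * s ^ i)) summable_on UNIV"
    by (rule summable_on_iff_abs_summable_on_real[THEN iffD1])
  then have "(\<lambda>i. \<bar>c i\<bar> * s ^ i) summable_on UNIV"
    using s by (simp add: abs_mult power_abs)
  then obtain M where M: "((\<lambda>i. \<bar>c i\<bar> * s ^ i) has_sum M) UNIV"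
    unfolding summable_on_def by blast
  have "\<bar>f x\<bar> \<le> M" if x: "\<bar>x - x0\<bar> < s" for x
  proof -
    have "\<bar>c i * (x - x0) ^ i\<bar> \<le> \<bar>c i\<bar> * s ^ i" for i
      using x by (auto simp: abs_mult power_abs intro!: mult_left_mono power_mono)
    then have "norm (f x) \<le> M"
      using x s by (intro norm_infsum_le[OF series M]) auto
    then show ?thesis by simp
  qed
  then show ?thesis
    using s by blast
qed

lemma eps_linear_near_mult_locally_bounded:
  assumes "\<exists>s>0. \<exists>B. \<forall>x. \<bar>x - x0\<bar> < s \<longrightarrow> \<bar>f x\<bar> \<le> B"
  shows "eps_linear_near (\<lambda>x e. e * f x) x0"
proof -
  obtain s B where "s > 0" and B: "\<And>x. \<bar>x - x0\<bar> < s \<Longrightarrow> \<bar>f x\<bar> \<le> B"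
    using assms by blast
  have "\<bar>e * f x\<bar> \<le> B * \<bar>e\<bar>" if "\<bar>x - x0\<bar> < s" for x e
    using mult_left_mono[OF B[OF that] abs_ge_zero[of e]] by (simp add: abs_mult mult.commute)
  then show ?thesis
    unfolding eps_linear_near_def using \<open>s > 0\<close> by blast
qed

lemma eps_linear_near_diff:
  assumes "eps_linear_near F x0" "eps_linear_near G x0"
  shows "eps_linear_near (\<lambda>x e. F x e - G x e) x0"
proof -
  obtain s1 K1 where "s1 > 0" and F: "\<And>x e. \<bar>x - x0\<bar> < s1 \<Longrightarrow> \<bar>e\<bar> < s1 \<Longrightarrow> \<bar>F x e\<bar> \<le> K1 * \<bar>e\<bar>"
    using assms(1) unfolding eps_linear_near_def by blast
  obtain s2 K2 where "s2 > 0" and G: "\<And>x e. \<bar>x - x0\<bar> < s2 \<Longrightarrow> \<bar>e\<bar> < s2 \<Longrightarrow> \<bar>G x e\<bar> \<le> K2 * \<bar>e\<bar>"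
    using assms(2) unfolding eps_linear_near_def by blast
  have "\<bar>F x e - G x e\<bar> \<le> (K1 + K2) * \<bar>e\<bar>" if "\<bar>x - x0\<bar> < min s1 s2" "\<bar>e\<bar> < min s1 s2" for x e
    using F[of x e] G[of x e] that by (simp add: distrib_right abs_diff_le_iff) linarith
  then show ?thesis
    unfolding eps_linear_near_def using \<open>s1 > 0\<close> \<open>s2 > 0\<close>
    by (intro exI[of _ "min s1 s2"]) auto
qed

lemma eps_linear_uniform_on_compact:
  assumes "compact S" "\<forall>x0\<in>S. eps_linear_near F x0"
  shows "\<exists>s>0. \<exists>K. \<forall>x\<in>S. \<forall>e. \<bar>e\<bar> < s \<longrightarrow> \<bar>F x e\<bar> \<le> K * \<bar>e\<bar>"
proof -
  obtain r K where r: "\<And>x0. x0 \<in> S \<Longrightarrow> r x0 > 0" and K: "\<And>x0 x e. x0 \<in> S \<Longrightarrow>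
      \<bar>x - x0\<bar> < r x0 \<Longrightarrow> \<bar>e\<bar> < r x0 \<Longrightarrow> \<bar>F x e\<bar> \<le> K x0 * \<bar>e\<bar>"
    using assms(2) unfolding eps_linear_near_def by metis
  have "S \<subseteq> (\<Union>x0\<in>S. ball x0 (r x0))"
    using r by force
  then obtain C where C: "C \<subseteq> S" "finite C" "S \<subseteq> (\<Union>c\<in>C. ball c (r c))"
    using compactE_image[OF assms(1), of S "\<lambda>x0. ball x0 (r x0)"] by blast
  define s where "s = Min (insert 1 (r ` C))"
  define L where "L = Max (insert 0 (K ` C))"
  have "s > 0"
    using C r by (auto simp: s_def)
  have "\<bar>F x e\<bar> \<le> L * \<bar>e\<bar>" if "x \<in> S" "\<bar>e\<bar> < s" for x e
  proof -
    obtain c where c: "c \<in> C" "\<bar>x - c\<bar> < r c"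
      using C(3) \<open>x \<in> S\<close> by (force simp: dist_real_def abs_minus_commute)
    have "s \<le> r c" "K c \<le> L"
      using C(2) c(1) by (auto simp: s_def L_def)
    then have "\<bar>F x e\<bar> \<le> K c * \<bar>e\<bar>" "K c * \<bar>e\<bar> \<le> L * \<bar>e\<bar>"
      using K[OF _ c(2)] C(1) c(1) that(2) by (auto intro: mult_right_mono)
    then show ?thesis by linarith
  qed
  then show ?thesis
    using \<open>s > 0\<close> by blast
qed

lemma eps_linear_uniform_periodic:
  assumes "P > 0" "a > 0" "\<And>x0. eps_linear_near F x0"
    and periodic: "\<And>x e. \<bar>e\<bar> < a \<Longrightarrow> F (x + P) e = F x e"
  shows "\<exists>s>0. \<exists>K. \<forall>x e. \<bar>e\<bar> < s \<longrightarrow> \<bar>F x e\<bar> \<le> K * \<bar>e\<bar>"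
proof -
  obtain s K where "s > 0" and bound: "\<And>x e. x \<in> {0..P} \<Longrightarrow> \<bar>e\<bar> < s \<Longrightarrow> \<bar>F x e\<bar> \<le> K * \<bar>e\<bar>"
    using eps_linear_uniform_on_compact[of "{0..P}" F] assms(3) by blast
  have "\<bar>F x e\<bar> \<le> K * \<bar>e\<bar>" if "\<bar>e\<bar> < min s a" for x e
  proof -
    interpret periodic_fun_simple "\<lambda>x. F x e" P
      by standard (use periodic that in auto)
    define k where "k = \<lfloor>x / P\<rfloor>"
    have "x - of_int k * P \<in> {0..P}"
      using \<open>P > 0\<close> floor_divide_lower[of P x] floor_divide_upper[of P x]
      by (auto simp: k_def algebra_simps)
    then show ?thesis
      using bound[of "x - of_int k * P" e] that minus_of_int[of x k] by simp
  qed
  then show ?thesis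
    using \<open>s > 0\<close> \<open>a > 0\<close> by (intro exI[of _ "min s a"]) auto
qed

lemma eps_linear_bound_imp_small:
  fixes F :: "'a \<Rightarrow> real \<Rightarrow> real"
  assumes "s > 0" "\<eta> > 0" and bound: "\<forall>x e. \<bar>e\<bar> < s \<longrightarrow> \<bar>F x e\<bar> \<le> K * \<bar>e\<bar>"
  shows "\<exists>r>0. \<forall>x e. \<bar>e\<bar> < r \<longrightarrow> \<bar>F x e\<bar> < \<eta>"
proof (intro exI[of _ "min s (\<eta> / (\<bar>K\<bar> + 1))"] conjI allI impI)
  fix x e
  assume e: "\<bar>e\<bar> < min s (\<eta> / (\<bar>K\<bar> + 1))"
  then have "\<bar>F x e\<bar> \<le> K * \<bar>e\<bar>"
    using bound by simp
  also have "\<dots> \<le> (\<bar>K\<bar> + 1) * \<bar>e\<bar>"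
    by (intro mult_right_mono) auto
  also have "\<dots> < \<eta>"
    using e by (simp add: pos_less_divide_eq mult.commute)
  finally show "\<bar>F x e\<bar> < \<eta>" .
qed (use assms in auto)

lemma Tmap_funpow_shift:
  assumes "\<forall>x. f (x + c) = f x"
  shows "(Tmap f mu e d ^^ n) (x + c, y) =
    (fst ((Tmap f mu e d ^^ n) (x, y)) + c, snd ((Tmap f mu e d ^^ n) (x, y)))"
proof (induction n)
  case (Suc n)
  obtain a b where "(Tmap f mu e d ^^ n) (x, y) = (a, b)"
    by fastforce
  with Suc show ?case
    using assms by (simp add: Tmap_def Let_def)
qed simp

lemma nR_shift:
  assumes "\<forall>x. f (x + c) = f x"
  shows "nR f mu n (x + c) y e d = nR f mu n x y e d"
  using Tmap_funpow_shift[OF assms] by (simp add: nR_def)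

lemma nS_shift:
  assumes "\<forall>x. f (x + c) = f x"
  shows "nS f mu n (x + c) y e d = nS f mu n x y e d"
  using Tmap_funpow_shift[OF assms] by (simp add: nS_def)

lemma Tmap_preserves_periodic_orbit:
  assumes f_period: "\<forall>x. f (x + real n * mu) = f x"
    and orbit: "nR f mu n x y e d = 0" "nS f mu n x y e d = 0"
    and step: "Tmap f mu e d (x, y) = (x1, y1)"
  shows "nR f mu n x1 y1 e d = 0 \<and> nS f mu n x1 y1 e d = 0"
proof -
  let ?T = "Tmap f mu e d"
  have returns: "(?T ^^ n) (x, y) = (x + real n * mu, y)"
    using orbit by (simp add: nR_def nS_def prod_eq_iff)
  have "(?T ^^ n) (x1, y1) = ?T ((?T ^^ n) (x, y))"
    by (simp add: step[symmetric] funpow_swap1)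
  also have "\<dots> = ?T (x + real n * mu, y)"
    by (simp only: returns)
  also have "\<dots> = (x1 + real n * mu, y1)"
    using Tmap_funpow_shift[OF f_period, where n=1 and x=x and y=y] step by simp
  finally show ?thesis
    by (simp add: nR_def nS_def)
qed

lemma Tmap_preserves_solution_branch:
  assumes f_period: "\<forall>x. f (x + real n * mu) = f x"
    and solution: "\<bar>Delta x0 e\<bar> < eta"
      "nR f mu n x0 (Y x0 e) e (Delta x0 e) = 0" "nS f mu n x0 (Y x0 e) e (Delta x0 e) = 0"
    and unique: "\<And>delta y. \<bar>delta\<bar> < eta \<Longrightarrow> \<bar>y\<bar> < eta \<Longrightarrow>
      nR f mu n x1 y e delta = 0 \<Longrightarrow> nS f mu n x1 y e delta = 0 \<Longrightarrow> delta = Delta x1 e \<and> y = Y x1 e"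
    and step: "Tmap f mu e (Delta x0 e) (x0, Y x0 e) = (x1, y1)"
    and "\<bar>y1\<bar> < eta"
  shows "Delta x1 e = Delta x0 e \<and> Y x1 e = y1"
  using unique[OF solution(1) \<open>\<bar>y1\<bar> < eta\<close>]
    Tmap_preserves_periodic_orbit[OF f_period solution(2,3) step] by simp

theorem mainTheorem6:
  fixes p :: int and q :: nat and f :: "real \<Rightarrow> real"
    and Delta Y :: "real \<Rightarrow> real \<Rightarrow> real" and epsbb eta :: real
  defines "mu \<equiv> 2 * pi * real_of_int p / real q"
  assumes q_pos: "q \<ge> 1"
    and f_periodic: "\<forall>x. f (x + 2 * pi) = f x"
    and f_analytic: "real_analytic_on f UNIV"
    and epsbb_pos: "epsbb > 0" and eta_pos: "eta > 0"
    and Delta_analytic: "real_analytic2_on Delta (UNIV \<times> {-epsbb<..<epsbb})"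
    and Y_analytic: "real_analytic2_on Y (UNIV \<times> {-epsbb<..<epsbb})"
    and Delta_zero: "\<forall>x. Delta x 0 = 0"
    and Y_zero: "\<forall>x. Y x 0 = 0"
    and solution: "\<forall>x eps. \<bar>eps\<bar> < epsbb \<longrightarrow>
        \<bar>Delta x eps\<bar> < eta \<and> \<bar>Y x eps\<bar> < eta \<and>
        nR f mu q x (Y x eps) eps (Delta x eps) = 0 \<and>
        nS f mu q x (Y x eps) eps (Delta x eps) = 0"
    and unique: "\<forall>x eps delta y. \<bar>eps\<bar> < epsbb \<longrightarrow> \<bar>delta\<bar> < eta \<longrightarrow> \<bar>y\<bar> < eta \<longrightarrow>
        nR f mu q x y eps delta = 0 \<longrightarrow> nS f mu q x y eps delta = 0 \<longrightarrow>
        delta = Delta x eps \<and> y = Y x eps"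
  shows "\<exists>epsb > 0. \<forall>x0 eps. \<bar>eps\<bar> < epsb \<longrightarrow>
          (let y0 = Y x0 eps; delta = Delta x0 eps;
               (x1, y1) = Tmap f mu eps delta (x0, y0)
           in Delta x1 eps = Delta x0 eps \<and> Y x1 eps = y1)"
proof -
  have f_period: "\<forall>x. f (x + real q * mu) = f x"
  proof
    fix x
    interpret periodic_fun_simple f "2 * pi"
      by standard (use f_periodic in auto)
    show "f (x + real q * mu) = f x"
      using plus_of_int[of x p] q_pos by (simp add: mu_def mult_ac)
  qed
  have DY_periodic: "Delta (x + 2 * pi) e = Delta x e \<and> Y (x + 2 * pi) e = Y x e"
    if "\<bar>e\<bar> < epsbb" for x e
    using solution unique that nR_shift[OF f_periodic] nS_shift[OF f_periodic] by metis
  define H where "H x e = Y x e - Delta x e - e * f x" for x e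
  have "eps_linear_near H x0" for x0
  proof -
    have "(x0, 0) \<in> UNIV \<times> {-epsbb<..<epsbb}"
      using epsbb_pos by simp
    then show ?thesis
      unfolding H_def
      by (intro eps_linear_near_diff eps_linear_near_mult_locally_bounded
          real_analytic2_on_imp_eps_linear_near[OF Y_analytic _ Y_zero]
          real_analytic2_on_imp_eps_linear_near[OF Delta_analytic _ Delta_zero]
          real_analytic_on_locally_bounded[OF f_analytic]) auto
  qed
  moreover have "H (x + 2 * pi) e = H x e" if "\<bar>e\<bar> < epsbb" for x e
    using DY_periodic[OF that] f_periodic by (simp add: H_def)
  ultimately obtain s K where "s > 0" "\<forall>x e. \<bar>e\<bar> < s \<longrightarrow> \<bar>H x e\<bar> \<le> K * \<bar>e\<bar>"
    using eps_linear_uniform_periodic[of "2 * pi" epsbb H] epsbb_pos by auto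
  then obtain r where "r > 0" and H_small: "\<forall>x e. \<bar>e\<bar> < r \<longrightarrow> \<bar>H x e\<bar> < eta"
    using eps_linear_bound_imp_small[OF _ eta_pos] by blast
  show ?thesis
  proof (intro exI[of _ "min epsbb r"] conjI allI impI)
    fix x0 eps
    assume eps: "\<bar>eps\<bar> < min epsbb r"
    obtain x1 y1 where step: "Tmap f mu eps (Delta x0 eps) (x0, Y x0 eps) = (x1, y1)"
      by fastforce
    have "y1 = H x0 eps"
      using step by (auto simp: Tmap_def H_def Let_def)
    then have "\<bar>y1\<bar> < eta"
      using H_small eps by simp
    then have "Delta x1 eps = Delta x0 eps \<and> Y x1 eps = y1"
      using eps solution unique
      by (intro Tmap_preserves_solution_branch[where Delta = Delta and Y = Y, OF f_period _ _ _ _ step]) auto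
    then show "let y0 = Y x0 eps; delta = Delta x0 eps;
        (x1, y1) = Tmap f mu eps delta (x0, y0) in Delta x1 eps = Delta x0 eps \<and> Y x1 eps = y1"
      using step by simp
  qed (use \<open>r > 0\<close> epsbb_pos in auto)
qed

end
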